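(* Let $P$ be a finite poset and $R$ a commutative unital ring. Then $$Z^3_2(P,R)=Z^3_1(P,R)^2=\mathrm{span}_R\{e_{xxy}+e_{xyy}: x,y\in P,\ l(x,y)=1\}\oplus J^3_2(P,R).$$ In particular, $Z^3_2(P,R)$ is a subalgebra of $I^3(P,R)$.
   Context: For a finite poset $P$, $P^3_\le=\{(x,y,z)\in P^3: x\le y\le z\}$, and $I^3(P,R)$ is the $R$-module of functions $f:P^3_\le\to R$ with multiplication $(fg)(x_1,x_2,x_3)=\sum f(x_1,y_1,y_2)g(y_1,y_2,x_3)$ over all $x_1\le y_1\le x_2\le y_2\le x_3$. For $x\le y\le z$, $e_{xyz}$ is the function equal to $1$ at $(x,y,z)$ and $0$ elsewhere. For $a\le b$, $l(a,b)$ is the maximum of $|C|-1$ over chains $C$ in the interval $[a,b]$. $J^3_k(P,R)=\{f: f(x_1,x_2,x_3)=0 \text{ whenever } l(x_1,x_3)<k\}$. $[f,g]=fg-gf$; for subsets $U,V$, $[U,V]$ (resp. $UV$) is the $R$-submodule spanned by all $[u,v]$ (resp. $uv$), $u\in U,v\in V$, and $U^2=UU$. $Z^3_1(P,R)=J^3_1(P,R)$, $Z^3_2(P,R)=[Z^3_1(P,R),Z^3_1(P,R)]$. *)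

theory Defs
  imports Main "HOL.Modules" "HOL-Library.Function_Algebras"
begin

text \<open>The finite poset P is modelled by a finite type 'a with a partial order.
  Elements of I^3(P,R) are functions 'a => 'a => 'a => 'r vanishing off P^3_le.\<close>

type_synonym ('a, 'r) fun3 = "'a \<Rightarrow> 'a \<Rightarrow> 'a \<Rightarrow> 'r"

definition I3 :: "('a::order, 'r::comm_ring_1) fun3 set" where
  "I3 = {f. \<forall>x y z. \<not> (x \<le> y \<and> y \<le> z) \<longrightarrow> f x y z = 0}"

definition scale3 :: "'r::comm_ring_1 \<Rightarrow> ('a, 'r) fun3 \<Rightarrow> ('a, 'r) fun3" where
  "scale3 c f = (\<lambda>x y z. c * f x y z)"

definition rspan :: "('a, 'r::comm_ring_1) fun3 set \<Rightarrow> ('a, 'r) fun3 set" where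
  "rspan S = module.span scale3 S"

definition mult3 :: "('a::{finite,order}, 'r::comm_ring_1) fun3 \<Rightarrow> ('a, 'r) fun3 \<Rightarrow> ('a, 'r) fun3" where
  "mult3 f g = (\<lambda>x1 x2 x3. if x1 \<le> x2 \<and> x2 \<le> x3 then
      (\<Sum>(y1, y2) \<in> {(y1, y2). x1 \<le> y1 \<and> y1 \<le> x2 \<and> x2 \<le> y2 \<and> y2 \<le> x3}.
          f x1 y1 y2 * g y1 y2 x3)
    else 0)"

definition e3 :: "'a \<Rightarrow> 'a \<Rightarrow> 'a \<Rightarrow> ('a, 'r::comm_ring_1) fun3" where
  "e3 x y z = (\<lambda>a b c. if a = x \<and> b = y \<and> c = z then 1 else 0)"

definition is_chain :: "'a::order set \<Rightarrow> bool" where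
  "is_chain C \<longleftrightarrow> (\<forall>x\<in>C. \<forall>y\<in>C. x \<le> y \<or> y \<le> x)"

definition plen :: "'a::{finite,order} \<Rightarrow> 'a \<Rightarrow> nat" where
  "plen a b = Max {card C - 1 | C. C \<subseteq> {a..b} \<and> is_chain C}"

definition J3 :: "nat \<Rightarrow> ('a::{finite,order}, 'r::comm_ring_1) fun3 set" where
  "J3 k = {f \<in> I3. \<forall>x1 x2 x3. x1 \<le> x2 \<and> x2 \<le> x3 \<and> plen x1 x3 < k \<longrightarrow> f x1 x2 x3 = 0}"

definition commut3 :: "('a::{finite,order}, 'r::comm_ring_1) fun3 \<Rightarrow> ('a, 'r) fun3 \<Rightarrow> ('a, 'r) fun3" where
  "commut3 f g = mult3 f g - mult3 g f"

definition setprod3 :: "('a::{finite,order}, 'r::comm_ring_1) fun3 set \<Rightarrow> ('a, 'r) fun3 set \<Rightarrow> ('a, 'r) fun3 set" where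
  "setprod3 U V = rspan {mult3 u v | u v. u \<in> U \<and> v \<in> V}"

definition setcomm3 :: "('a::{finite,order}, 'r::comm_ring_1) fun3 set \<Rightarrow> ('a, 'r) fun3 set \<Rightarrow> ('a, 'r) fun3 set" where
  "setcomm3 U V = rspan {commut3 u v | u v. u \<in> U \<and> v \<in> V}"

definition Z3_1 :: "('a::{finite,order}, 'r::comm_ring_1) fun3 set" where
  "Z3_1 = J3 1"

definition Z3_2 :: "('a::{finite,order}, 'r::comm_ring_1) fun3 set" where
  "Z3_2 = setcomm3 Z3_1 Z3_1"

end

theory Submission
  imports Defs
begin

text \<open>
  Call f cover-balanced if f(x,x,x) = 0 for all x and f(x,x,w) = f(x,w,w) whenever w covers x,
  i.e. l(x,w) = 1. Evaluating a product uv of elements of Z^3_1 at such triples shows that it is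
  cover-balanced, so Z^3_2 is contained in Z^3_1^2, which is contained in the space C of
  cover-balanced functions.

  Conversely uv = [u,v] whenever vu = 0, and such products of basis functions give
  e_xyw = e_xyy e_yyw for x < y < w, and e_xyz e_yzw = e_xyw + e_xzw when z covers y.
  Choosing y to cover x (or z to be covered by w) inside an interval [x,w] with l(x,w) >= 2 and
  subtracting the e_xyw already obtained yields e_xxw and e_xww; thus J^3_2 lies in Z^3_2, and so
  does e_xxw + e_xww for every cover x < w. A cover-balanced f differs from the sum of
  f(x,x,w) (e_xxw + e_xww) over all covers by an element of J^3_2, hence C = B + J^3_2 lies in
  Z^3_2. The sum is direct because B is supported on the triples (x,y,w) with w covering x,
  where every element of J^3_2 vanishes.
\<close>

interpretation fun3: module "scale3 :: 'r::comm_ring_1 \<Rightarrow> ('a, 'r) fun3 \<Rightarrow> ('a, 'r) fun3"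
  by unfold_locales (auto simp: scale3_def fun_eq_iff algebra_simps)

lemma rspan_eq_span: "rspan = fun3.span"
  by (simp add: rspan_def fun_eq_iff)

lemma scale3_apply [simp]: "scale3 c f x y z = c * f x y z"
  by (simp add: scale3_def)

lemma sum_fun3_apply: "(\<Sum>i\<in>A. F i) x y z = (\<Sum>i\<in>A. F i x y z)"
  by (induction A rule: infinite_finite_induct) auto

lemma e3_apply: "e3 x y z a b c = (if a = x \<and> b = y \<and> c = z then 1 else 0)"
  by (simp add: e3_def)

lemma fun3_expansion:
  fixes f :: "('a::finite, 'r::comm_ring_1) fun3"
  shows "f = (\<Sum>(a, b, c)\<in>UNIV. scale3 (f a b c) (e3 a b c))"
proof (intro ext)
  fix x y z :: 'a
  have "(\<Sum>(a, b, c)\<in>UNIV. scale3 (f a b c) (e3 a b c)) x y z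
      = (\<Sum>k\<in>UNIV. if k = (x, y, z) then f x y z else 0)"
    unfolding sum_fun3_apply by (rule sum.cong) (auto simp: e3_apply split: if_splits)
  then show "f x y z = (\<Sum>(a, b, c)\<in>UNIV. scale3 (f a b c) (e3 a b c)) x y z"
    by simp
qed

lemma in_subspace_if_e3_in:
  fixes f :: "('a::finite, 'r::comm_ring_1) fun3"
  assumes "fun3.subspace S" and "\<And>a b c. f a b c \<noteq> 0 \<Longrightarrow> e3 a b c \<in> S"
  shows "f \<in> S"
proof (subst fun3_expansion, rule fun3.subspace_sum[OF assms(1)], clarify)
  fix a b c
  show "scale3 (f a b c) (e3 a b c) \<in> S"
    using assms fun3.subspace_0[OF assms(1)] fun3.subspace_scale[OF assms(1)]
    by (cases "f a b c = 0") (simp_all add: fun3.scale_zero_left)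
qed

definition covered_by :: "'a::order \<Rightarrow> 'a \<Rightarrow> bool" where
  "covered_by a c \<longleftrightarrow> a < c \<and> {a<..<c} = {}"

lemma covered_by_between_iff:
  "covered_by a c \<Longrightarrow> a \<le> b \<and> b \<le> c \<longleftrightarrow> b = a \<or> b = c"
  by (auto simp: covered_by_def less_le)

lemma covered_by_exists_above:
  fixes a c :: "'a::{finite,order}"
  assumes "a < c"
  obtains m where "covered_by a m" "m \<le> c"
proof -
  obtain m where m: "m \<in> {a<..c}" and min: "\<forall>b\<in>{a<..c}. b \<le> m \<longrightarrow> m = b"
    using finite_has_minimal[of "{a<..c}"] assms by auto
  have "covered_by a m"
    using m min by (fastforce simp: covered_by_def less_le intro: order_trans)
  with m that show ?thesis by simp
qed

lemma covered_by_exists_below: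
  fixes a c :: "'a::{finite,order}"
  assumes "a < c"
  obtains m where "a \<le> m" "covered_by m c"
proof -
  obtain m where m: "m \<in> {a..<c}" and max: "\<forall>b\<in>{a..<c}. m \<le> b \<longrightarrow> m = b"
    using finite_has_maximal[of "{a..<c}"] assms by auto
  have "covered_by m c"
    using m max by (fastforce simp: covered_by_def less_le intro: order_trans)
  with m that show ?thesis by auto
qed

lemma plen_ge_card:
  fixes C :: "'a::{finite,order} set"
  shows "C \<subseteq> {a..b} \<Longrightarrow> is_chain C \<Longrightarrow> card C - 1 \<le> plen a b"
  unfolding plen_def by (rule Max_ge) auto

lemma plen_le_card:
  fixes a b :: "'a::{finite,order}"
  assumes "{a..b} \<subseteq> S"
  shows "plen a b \<le> card S - 1"
proof -
  have "{} \<subseteq> {a..b} \<and> is_chain ({} :: 'a set)"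
    by (simp add: is_chain_def)
  then show ?thesis
    unfolding plen_def using assms
    by (intro Max.boundedI) (auto intro!: diff_le_mono card_mono)
qed

lemma plen_ge_1_iff: "1 \<le> plen a c \<longleftrightarrow> (a::'a::{finite,order}) < c"
proof
  assume "1 \<le> plen a c"
  moreover have "plen a c \<le> card {a} - 1" if "\<not> a < c"
    using that by (intro plen_le_card) (auto simp: less_le)
  ultimately show "a < c" by fastforce
next
  assume "a < c"
  then have "card {a, c} - 1 \<le> plen a c"
    by (intro plen_ge_card) (auto simp: is_chain_def)
  with \<open>a < c\<close> show "1 \<le> plen a c" by simp
qed

lemma plen_ge_2_iff: "2 \<le> plen a c \<longleftrightarrow> {a<..<c} \<noteq> {}" for a c :: "'a::{finite,order}"
proof
  assume "2 \<le> plen a c"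
  moreover have "plen a c \<le> card {a, c} - 1" if "{a<..<c} = {}"
    using that by (intro plen_le_card) (auto simp: less_le)
  moreover have "card {a, c} - 1 \<le> 1" by (cases "a = c") auto
  ultimately show "{a<..<c} \<noteq> {}" by fastforce
next
  assume "{a<..<c} \<noteq> {}"
  then obtain m where m: "a < m" "m < c" by auto
  then have "card {a, m, c} - 1 \<le> plen a c"
    by (intro plen_ge_card) (auto simp: is_chain_def intro: order.trans)
  moreover have "a \<noteq> m" "m \<noteq> c" "a \<noteq> c" using m by auto
  then have "card {a, m, c} = 3" by simp
  ultimately show "2 \<le> plen a c" by simp
qed

lemma plen_eq_1_iff: "plen a c = 1 \<longleftrightarrow> covered_by a c" for a c :: "'a::{finite,order}"
  using plen_ge_1_iff[of a c] plen_ge_2_iff[of a c] unfolding covered_by_def by linarith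

lemma Z3_1_iff: "f \<in> Z3_1 \<longleftrightarrow> f \<in> I3 \<and> (\<forall>x. f x x x = 0)"
proof -
  have "plen x z < 1 \<longleftrightarrow> \<not> x < z" for x z :: 'a
    using plen_ge_1_iff[of x z] by linarith
  then show ?thesis
    unfolding Z3_1_def J3_def by (auto simp: less_le)
qed

lemma J3_2_iff:
  "f \<in> J3 2 \<longleftrightarrow> f \<in> I3 \<and> (\<forall>x y z. x \<le> y \<and> y \<le> z \<and> {x<..<z} = {} \<longrightarrow> f x y z = 0)"
proof -
  have "plen x z < 2 \<longleftrightarrow> {x<..<z} = {}" for x z :: 'a
    using plen_ge_2_iff[of x z] by linarith
  then show ?thesis
    unfolding J3_def by auto
qed

lemma subspace_Z3_1: "fun3.subspace (Z3_1 :: ('a::{finite,order}, 'r::comm_ring_1) fun3 set)"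
  by (rule fun3.subspaceI) (auto simp: Z3_1_iff I3_def)

lemma e3_in_I3: "x \<le> y \<Longrightarrow> y \<le> z \<Longrightarrow> e3 x y z \<in> I3"
  by (auto simp: I3_def e3_def)

lemma e3_in_Z3_1:
  "x \<le> y \<Longrightarrow> y \<le> z \<Longrightarrow> x < z \<Longrightarrow>
    (e3 x y z :: ('a::{finite,order}, 'r::comm_ring_1) fun3) \<in> Z3_1"
  by (auto simp: Z3_1_iff e3_in_I3 e3_apply)

lemma mult3_e3_e3:
  "mult3 (e3 x y z) (e3 y z w) p q r =
     (if p = x \<and> r = w \<and> x \<le> y \<and> y \<le> q \<and> q \<le> z \<and> z \<le> w then 1 else (0::'r::comm_ring_1))"
proof -
  define S where "S = {(y1, y2). p \<le> y1 \<and> y1 \<le> q \<and> q \<le> y2 \<and> y2 \<le> r}"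
  have "(\<Sum>(y1, y2)\<in>S. (e3 x y z p y1 y2 :: 'r) * e3 y z w y1 y2 r)
      = (\<Sum>k\<in>S. if k = (y, z) then (if p = x \<and> r = w then 1 else 0) else 0)"
    by (rule sum.cong) (auto simp: e3_apply split: if_splits)
  also have "\<dots> = (if (y, z) \<in> S \<and> p = x \<and> r = w then 1 else 0)"
    by simp
  finally show ?thesis
    unfolding mult3_def S_def[symmetric] by (auto simp: S_def intro: order_trans)
qed

lemma mult3_e3_e3_mismatch:
  "(y, z) \<noteq> (y', z') \<Longrightarrow>
    mult3 (e3 x y z) (e3 y' z' w) = (0 :: ('a::{finite,order}, 'r::comm_ring_1) fun3)"
  by (auto simp: mult3_def e3_def fun_eq_iff intro!: sum.neutral)

lemma mult3_e3_e3_cover: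
  assumes "covered_by y z" "x \<le> y" "z \<le> w"
  shows "mult3 (e3 x y z) (e3 y z w)
    = (e3 x y w + e3 x z w :: ('a::{finite,order}, 'r::comm_ring_1) fun3)"
  using assms covered_by_between_iff[OF assms(1)]
  by (auto simp: mult3_e3_e3 e3_apply fun_eq_iff covered_by_def)

lemma mult3_e3_e3_point:
  assumes "x \<le> y" "y \<le> w"
  shows "mult3 (e3 x y y) (e3 y y w) = (e3 x y w :: ('a::{finite,order}, 'r::comm_ring_1) fun3)"
  using assms by (auto simp: mult3_e3_e3 e3_apply fun_eq_iff intro: order.antisym)

lemma Z3_2_eq_span: "Z3_2 = fun3.span {commut3 u v | u v. u \<in> Z3_1 \<and> v \<in> Z3_1}"
  by (simp add: Z3_2_def setcomm3_def rspan_eq_span)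

lemma subspace_Z3_2: "fun3.subspace (Z3_2 :: ('a::{finite,order}, 'r::comm_ring_1) fun3 set)"
  by (simp add: Z3_2_eq_span)

lemma mult3_in_Z3_2:
  assumes "u \<in> Z3_1" "v \<in> Z3_1" "mult3 v u = 0"
  shows "mult3 u v \<in> Z3_2"
proof -
  have "mult3 u v = commut3 u v"
    using assms(3) by (simp add: commut3_def)
  then show ?thesis
    unfolding Z3_2_eq_span using assms(1,2) by (auto intro: fun3.span_base)
qed

lemma mult3_e3_e3_in_Z3_2:
  assumes "x \<le> y" "y \<le> z" "z \<le> w" "x < z" "y < w" "z \<noteq> x"
  shows "(mult3 (e3 x y z) (e3 y z w) :: ('a::{finite,order}, 'r::comm_ring_1) fun3) \<in> Z3_2"
  using assms by (intro mult3_in_Z3_2 e3_in_Z3_1 mult3_e3_e3_mismatch) auto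

lemma e3_in_Z3_2_inner:
  assumes "a < b" "b < c"
  shows "(e3 a b c :: ('a::{finite,order}, 'r::comm_ring_1) fun3) \<in> Z3_2"
proof -
  have "e3 a b c = (mult3 (e3 a b b) (e3 b b c) :: ('a, 'r) fun3)"
    using assms by (simp add: mult3_e3_e3_point)
  also have "\<dots> \<in> Z3_2"
    using assms by (intro mult3_e3_e3_in_Z3_2) auto
  finally show ?thesis .
qed

lemma e3_cover_sum_in_Z3_2:
  assumes "covered_by y z" "x \<le> y" "z \<le> w"
  shows "(e3 x y w + e3 x z w :: ('a::{finite,order}, 'r::comm_ring_1) fun3) \<in> Z3_2"
proof -
  have "y < z" using assms(1) by (simp add: covered_by_def)
  have "e3 x y w + e3 x z w = (mult3 (e3 x y z) (e3 y z w) :: ('a, 'r) fun3)"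
    using assms by (simp add: mult3_e3_e3_cover)
  also have "\<dots> \<in> Z3_2"
    using assms(2,3) \<open>y < z\<close> by (intro mult3_e3_e3_in_Z3_2) auto
  finally show ?thesis .
qed

lemma e3_in_Z3_2_left:
  assumes "a < c" "{a<..<c} \<noteq> {}"
  shows "(e3 a a c :: ('a::{finite,order}, 'r::comm_ring_1) fun3) \<in> Z3_2"
proof -
  obtain m where m: "covered_by a m" "m \<le> c"
    using covered_by_exists_above[OF assms(1)] .
  with assms(2) have "a < m" "m < c"
    by (auto simp: covered_by_def less_le)
  have "(e3 a a c + e3 a m c :: ('a, 'r) fun3) \<in> Z3_2"
    using m by (intro e3_cover_sum_in_Z3_2) auto
  moreover have "(e3 a m c :: ('a, 'r) fun3) \<in> Z3_2"
    using \<open>a < m\<close> \<open>m < c\<close> by (rule e3_in_Z3_2_inner)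
  ultimately show ?thesis
    using fun3.subspace_diff[OF subspace_Z3_2] by fastforce
qed

lemma e3_in_Z3_2_right:
  assumes "a < c" "{a<..<c} \<noteq> {}"
  shows "(e3 a c c :: ('a::{finite,order}, 'r::comm_ring_1) fun3) \<in> Z3_2"
proof -
  obtain m where m: "a \<le> m" "covered_by m c"
    using covered_by_exists_below[OF assms(1)] .
  with assms(2) have "a < m" "m < c"
    by (auto simp: covered_by_def less_le)
  have "(e3 a m c + e3 a c c :: ('a, 'r) fun3) \<in> Z3_2"
    using m by (intro e3_cover_sum_in_Z3_2) auto
  moreover have "(e3 a m c :: ('a, 'r) fun3) \<in> Z3_2"
    using \<open>a < m\<close> \<open>m < c\<close> by (rule e3_in_Z3_2_inner)
  ultimately show ?thesis
    using fun3.subspace_diff[OF subspace_Z3_2] by fastforce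
qed

lemma e3_in_Z3_2:
  assumes "a \<le> b" "b \<le> c" "{a<..<c} \<noteq> {}"
  shows "(e3 a b c :: ('a::{finite,order}, 'r::comm_ring_1) fun3) \<in> Z3_2"
proof -
  have "a < c" using assms(3) by auto
  consider "b = a" | "b = c" | "a < b" "b < c"
    using assms(1,2) by (auto simp: less_le)
  then show ?thesis
  proof cases
    case 1
    then show ?thesis using e3_in_Z3_2_left[OF \<open>a < c\<close> assms(3)] by simp
  next
    case 2
    then show ?thesis using e3_in_Z3_2_right[OF \<open>a < c\<close> assms(3)] by simp
  next
    case 3
    then show ?thesis by (rule e3_in_Z3_2_inner)
  qed
qed

lemma J3_2_subset_Z3_2: "J3 2 \<subseteq> Z3_2"
proof
  fix f :: "('a, 'b) fun3"
  assume f: "f \<in> J3 2"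
  show "f \<in> Z3_2"
  proof (rule in_subspace_if_e3_in[OF subspace_Z3_2])
    fix a b c
    assume "f a b c \<noteq> 0"
    with f have "a \<le> b" "b \<le> c"
      by (auto simp: J3_2_iff I3_def)
    with f \<open>f a b c \<noteq> 0\<close> have "{a<..<c} \<noteq> {}"
      by (auto simp: J3_2_iff)
    with \<open>a \<le> b\<close> \<open>b \<le> c\<close> show "e3 a b c \<in> Z3_2"
      by (rule e3_in_Z3_2)
  qed
qed

definition cover_balanced :: "('a::{finite,order}, 'r::comm_ring_1) fun3 set" where
  "cover_balanced = {f \<in> Z3_1. \<forall>x w. covered_by x w \<longrightarrow> f x x w = f x w w}"

lemma subspace_cover_balanced:
  "fun3.subspace (cover_balanced :: ('a::{finite,order}, 'r::comm_ring_1) fun3 set)"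
proof (rule fun3.subspaceI)
  show "0 \<in> cover_balanced"
    using fun3.subspace_0[OF subspace_Z3_1] by (simp add: cover_balanced_def)
next
  fix f g :: "('a, 'r) fun3"
  assume "f \<in> cover_balanced" "g \<in> cover_balanced"
  then show "f + g \<in> cover_balanced"
    using fun3.subspace_add[OF subspace_Z3_1] by (fastforce simp: cover_balanced_def)
next
  fix c :: 'r and f :: "('a, 'r) fun3"
  assume "f \<in> cover_balanced"
  then show "scale3 c f \<in> cover_balanced"
    using fun3.subspace_scale[OF subspace_Z3_1] by (fastforce simp: cover_balanced_def)
qed

lemma mult3_in_cover_balanced:
  assumes u: "u \<in> Z3_1" and v: "v \<in> Z3_1"
  shows "mult3 u v \<in> cover_balanced"
proof -
  have u0: "u x x x = 0" and v0: "v x x x = 0" for x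
    using u v by (auto simp: Z3_1_iff)
  have "mult3 u v \<in> I3"
    by (auto simp: I3_def mult3_def)
  moreover have "mult3 u v x x x = 0" for x
  proof -
    have "{(y1, y2). x \<le> y1 \<and> y1 \<le> x \<and> x \<le> y2 \<and> y2 \<le> x} = {(x, x)}"
      by (auto intro: order.antisym)
    then show ?thesis by (simp add: mult3_def u0)
  qed
  moreover have "mult3 u v x x w = mult3 u v x w w" if "covered_by x w" for x w
  proof -
    have "x < w" using that by (simp add: covered_by_def)
    have "{(y1, y2). x \<le> y1 \<and> y1 \<le> x \<and> x \<le> y2 \<and> y2 \<le> w} = {(x, x), (x, w)}"
      and "{(y1, y2). x \<le> y1 \<and> y1 \<le> w \<and> w \<le> y2 \<and> y2 \<le> w} = {(x, w), (w, w)}"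
      using covered_by_between_iff[OF that] \<open>x < w\<close> by (auto intro: order.antisym)
    \<comment> \<open>both sides reduce to \<open>u x x w * v x w w\<close>\<close>
    with \<open>x < w\<close> show ?thesis by (simp add: mult3_def u0 v0 less_imp_le)
  qed
  ultimately show ?thesis
    unfolding cover_balanced_def Z3_1_iff by blast
qed

lemma mult3_in_setprod3: "u \<in> U \<Longrightarrow> v \<in> V \<Longrightarrow> mult3 u v \<in> setprod3 U V"
  unfolding setprod3_def rspan_eq_span by (blast intro: fun3.span_base)

lemma setcomm3_subset_setprod3: "setcomm3 U U \<subseteq> setprod3 U U"
  unfolding setcomm3_def setprod3_def rspan_eq_span
proof (rule fun3.span_minimal[OF _ fun3.subspace_span], clarify)
  fix u v
  assume "u \<in> U" "v \<in> U"
  then have "mult3 u v \<in> fun3.span {mult3 u v |u v. u \<in> U \<and> v \<in> U}"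
    and "mult3 v u \<in> fun3.span {mult3 u v |u v. u \<in> U \<and> v \<in> U}"
    by (auto intro: fun3.span_base)
  then show "commut3 u v \<in> fun3.span {mult3 u v |u v. u \<in> U \<and> v \<in> U}"
    unfolding commut3_def by (rule fun3.span_diff)
qed

lemma setprod3_Z3_1_subset_cover_balanced: "setprod3 Z3_1 Z3_1 \<subseteq> cover_balanced"
  unfolding setprod3_def rspan_eq_span
  by (rule fun3.span_minimal[OF _ subspace_cover_balanced]) (auto intro: mult3_in_cover_balanced)

definition cover_gens :: "('a::{finite,order}, 'r::comm_ring_1) fun3 set" where
  "cover_gens = {e3 x x y + e3 x y y | x y. covered_by x y}"

lemma span_cover_gens_subset_Z3_2: "fun3.span cover_gens \<subseteq> Z3_2"
  by (rule fun3.span_minimal[OF _ subspace_Z3_2])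
    (auto simp: cover_gens_def covered_by_def intro: e3_cover_sum_in_Z3_2)

lemma cover_balanced_decomposition:
  fixes f :: "('a::{finite,order}, 'r::comm_ring_1) fun3"
  assumes f: "f \<in> cover_balanced"
  obtains s where "s \<in> fun3.span cover_gens" "f - s \<in> J3 2"
proof -
  define s where
    "s = (\<Sum>(x, w)\<in>{(x, w). covered_by x w}. scale3 (f x x w) (e3 x x w + e3 x w w))"
  have s_apply: "s p q r = (if covered_by p r \<and> (q = p \<or> q = r) then f p p r else 0)" for p q r
  proof -
    have "s p q r = (\<Sum>k\<in>{(x, w). covered_by x w}.
        if k = (p, r) then (if q = p \<or> q = r then f p p r else 0) else 0)"
      unfolding s_def sum_fun3_apply
      by (rule sum.cong) (auto simp: e3_apply covered_by_def split: if_splits)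
    then show ?thesis by simp
  qed
  have "s \<in> fun3.span cover_gens"
    unfolding s_def
    by (intro fun3.span_sum, clarify, intro fun3.span_scale fun3.span_base)
      (auto simp: cover_gens_def)
  moreover have "f - s \<in> J3 2"
    unfolding J3_2_iff
  proof (intro conjI allI impI)
    show "f - s \<in> I3"
      using f by (auto simp: cover_balanced_def Z3_1_iff I3_def s_apply covered_by_def)
  next
    fix x y z :: 'a
    assume xyz: "x \<le> y \<and> y \<le> z \<and> {x<..<z} = {}"
    show "(f - s) x y z = 0"
    proof (cases "x = z")
      case True
      with xyz have "y = x" by (auto intro: order.antisym)
      with True f show ?thesis
        by (simp add: s_apply cover_balanced_def Z3_1_iff covered_by_def)
    next
      case False
      with xyz have "covered_by x z"
        by (auto simp: covered_by_def less_le intro: order.trans)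
      with xyz f show ?thesis
        using covered_by_between_iff[of x z y] by (fastforce simp: s_apply cover_balanced_def)
    qed
  qed
  ultimately show ?thesis using that by blast
qed

lemma cover_balanced_subset_span_plus_J3_2:
  "(cover_balanced :: ('a::{finite,order}, 'r::comm_ring_1) fun3 set)
    \<subseteq> {b + j | b j. b \<in> fun3.span cover_gens \<and> j \<in> J3 2}"
proof
  fix f :: "('a, 'r) fun3"
  assume "f \<in> cover_balanced"
  then obtain s where "s \<in> fun3.span cover_gens" "f - s \<in> J3 2"
    by (rule cover_balanced_decomposition)
  then show "f \<in> {b + j | b j. b \<in> fun3.span cover_gens \<and> j \<in> J3 2}"
    by (intro CollectI exI[of _ s] exI[of _ "f - s"]) simp
qed

lemma span_plus_J3_2_subset_Z3_2:
  "{b + j | b j. b \<in> fun3.span cover_gens \<and> j \<in> J3 2}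
    \<subseteq> (Z3_2 :: ('a::{finite,order}, 'r::comm_ring_1) fun3 set)"
  using span_cover_gens_subset_Z3_2 J3_2_subset_Z3_2 fun3.subspace_add[OF subspace_Z3_2] by blast

lemma Z3_2_subset_setprod3_Z3_1: "Z3_2 \<subseteq> setprod3 Z3_1 Z3_1"
  unfolding Z3_2_def by (rule setcomm3_subset_setprod3)

lemma Z3_2_eq_cover_balanced: "Z3_2 = cover_balanced"
  using Z3_2_subset_setprod3_Z3_1 setprod3_Z3_1_subset_cover_balanced
    cover_balanced_subset_span_plus_J3_2 span_plus_J3_2_subset_Z3_2
  by blast

lemma setprod3_Z3_1_eq_cover_balanced: "setprod3 Z3_1 Z3_1 = cover_balanced"
  using setprod3_Z3_1_subset_cover_balanced Z3_2_subset_setprod3_Z3_1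
  unfolding Z3_2_eq_cover_balanced by (rule subset_antisym)

lemma cover_balanced_eq_span_plus_J3_2:
  "(cover_balanced :: ('a::{finite,order}, 'r::comm_ring_1) fun3 set)
    = {b + j | b j. b \<in> fun3.span cover_gens \<and> j \<in> J3 2}"
  using cover_balanced_subset_span_plus_J3_2 span_plus_J3_2_subset_Z3_2 unfolding Z3_2_eq_cover_balanced
  by (rule subset_antisym)

lemma span_cover_gens_vanishes:
  assumes "f \<in> fun3.span cover_gens" "\<not> covered_by a c"
  shows "f a b c = 0"
proof -
  have "fun3.span cover_gens \<subseteq> {f. \<forall>a b c. \<not> covered_by a c \<longrightarrow> f a b c = 0}"
    by (rule fun3.span_minimal, fastforce simp: cover_gens_def e3_apply, rule fun3.subspaceI) auto
  with assms show ?thesis by blast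
qed

lemma span_cover_gens_Int_J3_2:
  "fun3.span cover_gens \<inter> J3 2 = {0 :: ('a::{finite,order}, 'r::comm_ring_1) fun3}"
proof (intro subset_antisym subsetI)
  fix f :: "('a, 'r) fun3"
  assume "f \<in> fun3.span cover_gens \<inter> J3 2"
  then have f: "f \<in> fun3.span cover_gens" "f \<in> J3 2" by simp_all
  have "f a b c = 0" for a b c
  proof (cases "covered_by a c")
    case True
    then have "{a<..<c} = {}" by (simp add: covered_by_def)
    with f(2) show ?thesis
      by (cases "a \<le> b \<and> b \<le> c") (auto simp: J3_2_iff I3_def)
  next
    case False
    with f(1) show ?thesis by (rule span_cover_gens_vanishes)
  qed
  then show "f \<in> {0}" by (simp add: fun_eq_iff)
qed (simp add: fun3.span_zero J3_def I3_def)

theorem lemma2p5: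
  fixes B :: "('a::{finite,order}, 'r::comm_ring_1) fun3 set"
  defines "B \<equiv> rspan {e3 x x y + e3 x y y | x y. x \<le> y \<and> plen x y = 1}"
  shows "(Z3_2 :: ('a, 'r) fun3 set) = setprod3 Z3_1 Z3_1
    \<and> setprod3 (Z3_1 :: ('a, 'r) fun3 set) Z3_1 = {b + j | b j. b \<in> B \<and> j \<in> J3 2}
    \<and> B \<inter> J3 2 = {0}
    \<and> (\<forall>f \<in> Z3_2. \<forall>g \<in> Z3_2. mult3 f g \<in> (Z3_2 :: ('a, 'r) fun3 set))"
proof -
  have "x \<le> y \<and> plen x y = 1 \<longleftrightarrow> covered_by x y" for x y :: 'a
    using plen_eq_1_iff[of x y] unfolding covered_by_def by (blast intro: less_imp_le)
  then have "{e3 x x y + e3 x y y | x y. x \<le> y \<and> plen x y = 1} = (cover_gens :: ('a, 'r) fun3 set)"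
    by (simp only: cover_gens_def)
  then have B: "B = fun3.span cover_gens"
    by (simp add: B_def rspan_eq_span)
  have "mult3 f g \<in> Z3_2" if "f \<in> Z3_2" "g \<in> Z3_2" for f g :: "('a, 'r) fun3"
  proof -
    have "f \<in> Z3_1" "g \<in> Z3_1"
      using that by (simp_all add: Z3_2_eq_cover_balanced cover_balanced_def)
    then have "mult3 f g \<in> setprod3 Z3_1 Z3_1"
      by (rule mult3_in_setprod3)
    then show ?thesis
      by (simp add: setprod3_Z3_1_eq_cover_balanced Z3_2_eq_cover_balanced)
  qed
  moreover have "(Z3_2 :: ('a, 'r) fun3 set) = setprod3 Z3_1 Z3_1"
    by (simp add: Z3_2_eq_cover_balanced setprod3_Z3_1_eq_cover_balanced)
  ultimately show ?thesis
    unfolding B setprod3_Z3_1_eq_cover_balanced cover_balanced_eq_span_plus_J3_2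
      span_cover_gens_Int_J3_2
    by blast
qed

end
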